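(* Fix $M>1$, $M_1>0$ and let $\mathfrak C=\mathfrak C(M,M_1)$. Let $K:\mathbb R\to[0,\infty)$ be a bounded kernel with support contained in $[-1,1]$, $\int K(x)\,dx=1$, $\int xK(x)\,dx=0$ and $\int x^2K(x)\,dx>0$. Given i.i.d. observations $(U_1,V_1),\dots,(U_n,V_n)$ from a copula $C\in\mathfrak C$ and a bandwidth $h>0$, let $c_n(u,v)=\frac{1}{nh^2}\sum_{i=1}^nK\big(\frac{u-U_i}{h}\big)K\big(\frac{v-V_i}{h}\big)$ and define the plug-in estimator $\widehat{Ccor}=\int_0^1\int_0^1[1-c_n(u,v)]_+\,du\,dv$. Then there exist finite constants $A,B,M_5>0$ and $h_0>0$, depending only on $M$, $M_1$ and $K$, such that for all $n\ge1$ and all $h\in(0,h_0]$, $$\sup_{C\in\mathfrak C}E\big[|\widehat{Ccor}-Ccor(C)|\big]\le A\,h+\frac{B}{\sqrt{nh^2}}+\frac{M_5}{nh^2}.$$ Consequently, if $h=h_n\to0$ and $nh_n^2\to\infty$, $\widehat{Ccor}$ is uniformly consistent over $\mathfrak C$, and with $h=n^{-1/4}$ the uniform risk is $O(n^{-1/4})$.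
   Context: A copula is a probability distribution on $[0,1]^2$ with uniform marginals. For $M>1$ and $M_1>0$, $\mathfrak C(M,M_1)$ is the class of absolutely continuous copulas $C$ whose density $c$ is continuous on $(0,1)^2$ and satisfies: with $A_M=\{(u,v): c(u,v)<M\}$, $|c(u_1,v_1)-c(u_2,v_2)|\le M_1\|(u_1-u_2,v_1-v_2)\|$ whenever both points lie in $A_M$. The copula correlation is $Ccor(C)=\tfrac12\iint_{[0,1]^2}|c(u,v)-1|\,du\,dv$ (equivalently $\iint_{[0,1]^2}[1-c(u,v)]_+\,du\,dv$). Here $x_+=\max(x,0)$. *)

theory Defs
  imports "HOL-Probability.Probability"
begin

definition unit_sq :: "(real \<times> real) set" where
  "unit_sq = {0..1} \<times> {0..1}"

definition open_unit_sq :: "(real \<times> real) set" where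
  "open_unit_sq = {0<..<1} \<times> {0<..<1}"

definition is_copula_density :: "(real \<times> real \<Rightarrow> real) \<Rightarrow> bool" where
  "is_copula_density c \<longleftrightarrow>
     (\<forall>p\<in>open_unit_sq. 0 \<le> c p) \<and>
     set_integrable lborel unit_sq c \<and>
     (\<forall>t\<in>{0..1}. (LINT p:({0..t} \<times> {0..1})|lborel. c p) = t \<and>
                  (LINT p:({0..1} \<times> {0..t})|lborel. c p) = t)"

definition copula_class :: "real \<Rightarrow> real \<Rightarrow> (real \<times> real \<Rightarrow> real) set" where
  "copula_class M M1 = {c. is_copula_density c \<and> continuous_on open_unit_sq c \<and>
     (\<forall>p\<in>open_unit_sq. \<forall>q\<in>open_unit_sq. c p < M \<longrightarrow> c q < M \<longrightarrow>
         \<bar>c p - c q\<bar> \<le> M1 * dist p q)}"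

definition Ccor :: "(real \<times> real \<Rightarrow> real) \<Rightarrow> real" where
  "Ccor c = (1/2) * (LINT p:unit_sq|lborel. \<bar>c p - 1\<bar>)"

definition copula_measure :: "(real \<times> real \<Rightarrow> real) \<Rightarrow> (real \<times> real) measure" where
  "copula_measure c = density lborel (\<lambda>p. ennreal (c p) * indicator unit_sq p)"

definition sample_law :: "(real \<times> real \<Rightarrow> real) \<Rightarrow> nat \<Rightarrow> (nat \<Rightarrow> real \<times> real) measure" where
  "sample_law c n = PiM {..<n} (\<lambda>_. copula_measure c)"

definition kde :: "(real \<Rightarrow> real) \<Rightarrow> nat \<Rightarrow> real \<Rightarrow> (nat \<Rightarrow> real \<times> real) \<Rightarrow> real \<times> real \<Rightarrow> real" where
  "kde K n h \<omega> p = (1 / (real n * h\<^sup>2)) *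
     (\<Sum>i<n. K ((fst p - fst (\<omega> i)) / h) * K ((snd p - snd (\<omega> i)) / h))"

definition Ccor_hat :: "(real \<Rightarrow> real) \<Rightarrow> nat \<Rightarrow> real \<Rightarrow> (nat \<Rightarrow> real \<times> real) \<Rightarrow> real" where
  "Ccor_hat K n h \<omega> = (LINT p:unit_sq|lborel. max 0 (1 - kde K n h \<omega> p))"

definition risk :: "(real \<Rightarrow> real) \<Rightarrow> (real \<times> real \<Rightarrow> real) \<Rightarrow> nat \<Rightarrow> real \<Rightarrow> ennreal" where
  "risk K c n h = (\<integral>\<^sup>+ \<omega>. ennreal \<bar>Ccor_hat K n h \<omega> - Ccor c\<bar> \<partial>sample_law c n)"

definition admissible_kernel :: "(real \<Rightarrow> real) \<Rightarrow> bool" where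
  "admissible_kernel K \<longleftrightarrow>
     K \<in> borel_measurable borel \<and>
     (\<forall>x. 0 \<le> K x) \<and> bounded (range K) \<and>
     (\<forall>x. x \<notin> {-1..1} \<longrightarrow> K x = 0) \<and>
     (LINT x|lborel. K x) = 1 \<and>
     (LINT x|lborel. x * K x) = 0 \<and>
     (LINT x|lborel. x\<^sup>2 * K x) > 0"

end

theory Submission
  imports Defs
begin

text \<open>
  Since \<open>x \<mapsto> [1 - x]\<^sub>+\<close> is 1-Lipschitz, the error of the plug-in estimator is bounded by a
  stochastic part \<open>\<integral>|c\<^sub>n - E c\<^sub>n|\<close> plus a bias part \<open>\<integral>|[1 - E c\<^sub>n]\<^sub>+ - [1 - c]\<^sub>+|\<close> over the unit square.

  At each point \<open>c\<^sub>n\<close> is the mean of \<open>n\<close> i.i.d. kernel values in \<open>[0, \<parallel>K\<parallel>\<^sup>2\<^sub>\<infinity>/h\<^sup>2]\<close>, so its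
  variance is at most \<open>\<parallel>K\<parallel>\<^sup>2\<^sub>\<infinity> E c\<^sub>n / (nh\<^sup>2)\<close> and \<open>E|c\<^sub>n - E c\<^sub>n| \<le> \<parallel>K\<parallel>\<^sub>\<infinity> \<surd>(E c\<^sub>n) / \<surd>(nh\<^sup>2)\<close>;
  as \<open>E c\<^sub>n\<close> integrates to 1, the stochastic part is at most \<open>\<parallel>K\<parallel>\<^sub>\<infinity> / \<surd>(nh\<^sup>2)\<close>.

  \<open>E c\<^sub>n(p)\<close> is a weighted average of \<open>c\<close> over a window of diameter at most \<open>2h\<close>. Outside a frame
  of area \<open>4h\<close> along the boundary the window lies in the open square. If \<open>c(p) < (1 + M)/2\<close>,
  the intermediate value theorem on segments keeps \<open>c < M\<close> on the window, where the Lipschitz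
  condition gives \<open>|E c\<^sub>n(p) - c(p)| \<le> 2 M\<^sub>1 h\<close>; otherwise \<open>c \<ge> 1\<close> on the window and both positive
  parts vanish. The bound \<open>A h + B/\<surd>(nh\<^sup>2)\<close> obtained this way needs no \<open>1/(nh\<^sup>2)\<close> term.
\<close>

lemma nn_integral_lborel_rescale:
  fixes c :: real
  assumes [measurable]: "f \<in> borel_measurable borel" and c: "c \<noteq> 0"
  shows "(\<integral>\<^sup>+x. f ((x - a) / c) \<partial>lborel) = \<bar>c\<bar> * (\<integral>\<^sup>+x. f x \<partial>lborel)"
proof -
  have "(\<integral>\<^sup>+x. f x \<partial>lborel) = ennreal \<bar>1/c\<bar> * (\<integral>\<^sup>+x. f (- a / c + 1 / c * x) \<partial>lborel)"
    using c by (intro nn_integral_real_affine) auto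
  also have "(\<lambda>x. f (- a / c + 1 / c * x)) = (\<lambda>x. f ((x - a) / c))"
    using c by (simp add: field_simps)
  finally have "ennreal \<bar>c\<bar> * (\<integral>\<^sup>+x. f x \<partial>lborel)
      = ennreal \<bar>c\<bar> * ennreal \<bar>1/c\<bar> * (\<integral>\<^sup>+x. f ((x - a) / c) \<partial>lborel)"
    by (simp add: mult.assoc)
  also have "ennreal \<bar>c\<bar> * ennreal \<bar>1/c\<bar> = 1"
    using c by (simp add: ennreal_mult[symmetric] abs_mult[symmetric])
  finally show ?thesis by simp
qed

lemma nn_integral_lborel_pair:
  assumes [measurable]: "f \<in> borel_measurable (borel :: (real \<times> real) measure)"
  shows "(\<integral>\<^sup>+p. f p \<partial>lborel) = (\<integral>\<^sup>+x. (\<integral>\<^sup>+y. f (x, y) \<partial>lborel) \<partial>lborel)"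
proof -
  have "(\<integral>\<^sup>+x. (\<integral>\<^sup>+y. f (x, y) \<partial>lborel) \<partial>lborel) = integral\<^sup>N (lborel \<Otimes>\<^sub>M lborel) f"
    by (rule lborel.nn_integral_fst) (simp add: lborel_prod)
  then show ?thesis by (simp add: lborel_prod)
qed

lemma emeasure_lborel_Times:
  fixes A B :: "real set"
  assumes "A \<in> sets borel" "B \<in> sets borel"
  shows "emeasure lborel (A \<times> B) = emeasure lborel A * emeasure lborel B"
  using lborel.emeasure_pair_measure_Times[of A lborel B] assms by (simp add: lborel_prod)

section \<open>Product kernels\<close>

lemma admissible_kernel_nonneg: "admissible_kernel K \<Longrightarrow> 0 \<le> K x"
  by (simp add: admissible_kernel_def)

lemma borel_measurable_admissible_kernel: "admissible_kernel K \<Longrightarrow> K \<in> borel_measurable borel"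
  by (simp add: admissible_kernel_def)

lemma admissible_kernel_bounded:
  assumes "admissible_kernel K"
  obtains Kb where "Kb > 0" "\<And>x. K x \<le> Kb"
proof -
  obtain B where "\<forall>y\<in>range K. norm y \<le> B"
    using assms unfolding admissible_kernel_def bounded_iff by blast
  then have "K x \<le> max 1 B" for x by (auto simp: abs_le_iff le_max_iff_disj)
  then show ?thesis by (intro that[of "max 1 B"]) auto
qed

lemma nn_integral_admissible_kernel:
  assumes "admissible_kernel K"
  shows "(\<integral>\<^sup>+x. ennreal (K x) \<partial>lborel) = 1"
proof -
  have "(LINT x|lborel. K x) = 1" using assms unfolding admissible_kernel_def by blast
  then have "integrable lborel K" using not_integrable_integral_eq by force
  then have "(\<integral>\<^sup>+x. ennreal (K x) \<partial>lborel) = ennreal (LINT x|lborel. K x)"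
    by (rule nn_integral_eq_integral) (simp add: admissible_kernel_nonneg[OF assms])
  then show ?thesis using \<open>(LINT x|lborel. K x) = 1\<close> by simp
qed

definition product_kernel :: "(real \<Rightarrow> real) \<Rightarrow> real \<Rightarrow> real \<times> real \<Rightarrow> real \<times> real \<Rightarrow> real" where
  "product_kernel K h p q = K ((fst p - fst q) / h) * K ((snd p - snd q) / h) / h\<^sup>2"

lemma product_kernel_nonneg: "admissible_kernel K \<Longrightarrow> 0 \<le> product_kernel K h p q"
  unfolding product_kernel_def by (simp add: admissible_kernel_nonneg)

lemma product_kernel_le:
  assumes "admissible_kernel K" "\<And>x. K x \<le> Kb"
  shows "product_kernel K h p q \<le> Kb\<^sup>2 / h\<^sup>2"
proof -
  have "K ((fst p - fst q) / h) * K ((snd p - snd q) / h) \<le> Kb * Kb"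
    using assms by (intro mult_mono) (auto intro: order_trans admissible_kernel_nonneg)
  then show ?thesis unfolding product_kernel_def by (simp add: divide_right_mono power2_eq_square)
qed

lemma product_kernel_support:
  assumes "admissible_kernel K" "h > 0" "product_kernel K h p q \<noteq> 0"
  shows "\<bar>fst p - fst q\<bar> \<le> h" "\<bar>snd p - snd q\<bar> \<le> h"
proof -
  have "(fst p - fst q) / h \<in> {-1..1}" "(snd p - snd q) / h \<in> {-1..1}"
    using assms(1,3) unfolding admissible_kernel_def product_kernel_def by auto
  then show "\<bar>fst p - fst q\<bar> \<le> h" "\<bar>snd p - snd q\<bar> \<le> h"
    using assms(2) by (auto simp: abs_le_iff field_simps)
qed

lemma borel_measurable_product_kernel:
  assumes "admissible_kernel K"
  shows "(\<lambda>(p, q). product_kernel K h p q) \<in> borel_measurable (borel \<Otimes>\<^sub>M borel)"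
proof -
  have [measurable]: "K \<in> borel_measurable borel" using assms by (rule borel_measurable_admissible_kernel)
  show ?thesis unfolding product_kernel_def borel_prod[symmetric] by measurable
qed

lemma product_kernel_nn_integral:
  assumes K: "admissible_kernel K" and h: "h > 0"
  shows "(\<integral>\<^sup>+p. ennreal (product_kernel K h p q) \<partial>lborel) = 1"
    and "(\<integral>\<^sup>+q. ennreal (product_kernel K h p q) \<partial>lborel) = 1"
proof -
  have [measurable]: "K \<in> borel_measurable borel" using K by (rule borel_measurable_admissible_kernel)
  have unit: "(\<integral>\<^sup>+x. (\<integral>\<^sup>+y. ennreal (K ((x - a) / c) * K ((y - b) / c) / c\<^sup>2) \<partial>lborel) \<partial>lborel) = 1"
    if "c \<noteq> 0" for a b c :: real
  proof -
    have rescale: "(\<integral>\<^sup>+x. ennreal (K ((x - t) / c)) \<partial>lborel) = ennreal \<bar>c\<bar>" for t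
      using nn_integral_lborel_rescale[of "\<lambda>x. ennreal (K x)" c t] that
      by (simp add: nn_integral_admissible_kernel[OF K])
    have "ennreal (K ((x - a) / c) * K ((y - b) / c) / c\<^sup>2)
        = ennreal (1 / c\<^sup>2) * ennreal (K ((x - a) / c)) * ennreal (K ((y - b) / c))" for x y
      by (simp add: admissible_kernel_nonneg[OF K] ennreal_mult[symmetric] field_simps)
    then have "(\<integral>\<^sup>+x. (\<integral>\<^sup>+y. ennreal (K ((x - a) / c) * K ((y - b) / c) / c\<^sup>2) \<partial>lborel) \<partial>lborel)
        = ennreal (1 / c\<^sup>2) * ennreal \<bar>c\<bar> * ennreal \<bar>c\<bar>"
      by (simp add: nn_integral_cmult nn_integral_multc rescale mult.assoc)
    also have "\<dots> = 1"
      using that by (simp add: ennreal_mult[symmetric] power2_eq_square abs_mult[symmetric])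
    finally show ?thesis .
  qed
  show "(\<integral>\<^sup>+p. ennreal (product_kernel K h p q) \<partial>lborel) = 1"
    using unit[of h "fst q" "snd q"] h
    by (subst nn_integral_lborel_pair) (simp_all add: product_kernel_def borel_prod[symmetric])
  have "(fst p - x) / h = (x - fst p) / (- h)" "(snd p - y) / h = (y - snd p) / (- h)" for x y
    using h by (simp_all add: field_simps)
  then show "(\<integral>\<^sup>+q. ennreal (product_kernel K h p q) \<partial>lborel) = 1"
    using unit[of "- h" "fst p" "snd p"] h
    by (subst nn_integral_lborel_pair) (simp_all add: product_kernel_def borel_prod[symmetric])
qed

lemma product_kernel_integral:
  assumes K: "admissible_kernel K" and h: "h > 0"
  shows "integrable lborel (product_kernel K h p)" "(\<integral>q. product_kernel K h p q \<partial>lborel) = 1"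
proof -
  have [measurable]: "product_kernel K h p \<in> borel_measurable lborel"
    using measurable_Pair2[OF borel_measurable_product_kernel[OF K], of p] by simp
  have nn: "(\<integral>\<^sup>+q. ennreal (product_kernel K h p q) \<partial>lborel) = 1"
    by (rule product_kernel_nn_integral(2)[OF K h])
  show integrable: "integrable lborel (product_kernel K h p)"
    using nn by (intro integrableI_nonneg) (auto simp: product_kernel_nonneg[OF K])
  have "(\<integral>\<^sup>+q. ennreal (product_kernel K h p q) \<partial>lborel) = ennreal (\<integral>q. product_kernel K h p q \<partial>lborel)"
    by (rule nn_integral_eq_integral[OF integrable]) (simp add: product_kernel_nonneg[OF K])
  then show "(\<integral>q. product_kernel K h p q \<partial>lborel) = 1" using nn by simp
qed

lemma kde_eq_product_kernel:
  "n \<noteq> 0 \<Longrightarrow> kde K n h \<omega> p = (\<Sum>i<n. product_kernel K h p (\<omega> i)) / real n"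
  unfolding kde_def product_kernel_def by (simp add: sum_divide_distrib[symmetric] field_simps)

section \<open>Means of bounded i.i.d. variables\<close>

lemma (in prob_space) expectation_abs_le_sqrt:
  fixes X :: "'a \<Rightarrow> real"
  assumes [measurable]: "X \<in> borel_measurable M" and "integrable M (\<lambda>x. (X x)\<^sup>2)"
  shows "expectation (\<lambda>x. \<bar>X x\<bar>) \<le> sqrt (expectation (\<lambda>x. (X x)\<^sup>2))"
proof -
  have "integrable M X" using assms by (blast intro: square_integrable_imp_integrable)
  then have "variance (\<lambda>x. \<bar>X x\<bar>) = expectation (\<lambda>x. \<bar>X x\<bar>\<^sup>2) - (expectation (\<lambda>x. \<bar>X x\<bar>))\<^sup>2"
    using assms(2) by (intro variance_eq) simp_all
  then have "(expectation (\<lambda>x. \<bar>X x\<bar>))\<^sup>2 \<le> expectation (\<lambda>x. (X x)\<^sup>2)"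
    using variance_positive[of "\<lambda>x. \<bar>X x\<bar>"] by simp
  then show ?thesis by (simp add: real_le_rsqrt)
qed

lemma integral_PiM_coordinate:
  fixes f :: "'a \<Rightarrow> real"
  assumes "prob_space \<mu>" and [measurable]: "f \<in> borel_measurable \<mu>" and "i \<in> I"
  shows "(\<integral>\<omega>. f (\<omega> i) \<partial>PiM I (\<lambda>_. \<mu>)) = (\<integral>x. f x \<partial>\<mu>)"
proof -
  have "distr (PiM I (\<lambda>_. \<mu>)) \<mu> (\<lambda>\<omega>. \<omega> i) = \<mu>"
    by (rule distr_PiM_component) (use assms in auto)
  then have "(\<integral>x. f x \<partial>\<mu>) = (\<integral>x. f x \<partial>distr (PiM I (\<lambda>_. \<mu>)) \<mu> (\<lambda>\<omega>. \<omega> i))" by simp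
  also have "\<dots> = (\<integral>\<omega>. f (\<omega> i) \<partial>PiM I (\<lambda>_. \<mu>))"
    by (rule integral_distr) (use \<open>i \<in> I\<close> in measurable)
  finally show ?thesis ..
qed

lemma integral_PiM_coordinate_product:
  fixes f g :: "'a \<Rightarrow> real"
  assumes "prob_space \<mu>" "finite I" "integrable \<mu> f" "integrable \<mu> g" "i \<in> I" "j \<in> I" "i \<noteq> j"
  shows "(\<integral>\<omega>. f (\<omega> i) * g (\<omega> j) \<partial>PiM I (\<lambda>_. \<mu>)) = (\<integral>x. f x \<partial>\<mu>) * (\<integral>x. g x \<partial>\<mu>)"
proof -
  interpret prob_space \<mu> by (rule assms(1))
  interpret product_sigma_finite "\<lambda>_. \<mu>"
    by (simp add: product_sigma_finite_def sigma_finite_measure_axioms)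
  define F where "F k = (if k = i then f else if k = j then g else (\<lambda>_. 1))" for k
  have "(\<Prod>k\<in>I. F k (\<omega> k)) = (\<Prod>k\<in>{i, j}. F k (\<omega> k))" for \<omega>
    by (rule prod.mono_neutral_right) (use assms in \<open>auto simp: F_def\<close>)
  then have "(\<integral>\<omega>. f (\<omega> i) * g (\<omega> j) \<partial>PiM I (\<lambda>_. \<mu>)) = (\<integral>\<omega>. (\<Prod>k\<in>I. F k (\<omega> k)) \<partial>PiM I (\<lambda>_. \<mu>))"
    using assms(7) by (simp add: F_def)
  also have "\<dots> = (\<Prod>k\<in>I. expectation (F k))"
    using assms(2-4) by (intro product_integral_prod) (auto simp: F_def)
  also have "\<dots> = (\<Prod>k\<in>{i, j}. expectation (F k))"
    by (rule prod.mono_neutral_right) (use assms in \<open>auto simp: F_def prob_space\<close>)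
  finally show ?thesis using assms(7) by (simp add: F_def)
qed

lemma iid_sum_variance:
  fixes \<mu> :: "'a measure" and g :: "'a \<Rightarrow> real"
  assumes "prob_space \<mu>" and [measurable]: "g \<in> borel_measurable \<mu>"
    and bounded: "\<And>x. x \<in> space \<mu> \<Longrightarrow> \<bar>g x\<bar> \<le> B"
  shows "(\<integral>\<omega>. ((\<Sum>i<n. g (\<omega> i)) - real n * (\<integral>x. g x \<partial>\<mu>))\<^sup>2 \<partial>PiM {..<n} (\<lambda>_. \<mu>))
           = real n * (\<integral>x. (g x - (\<integral>y. g y \<partial>\<mu>))\<^sup>2 \<partial>\<mu>)"
proof -
  interpret \<mu>: prob_space \<mu> by (rule assms(1))
  define P where "P = PiM {..<n} (\<lambda>_. \<mu>)"
  interpret P: prob_space P unfolding P_def by (rule prob_space_PiM) (rule assms(1))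
  define Z where "Z x = g x - \<mu>.expectation g" for x
  have [measurable]: "Z \<in> borel_measurable \<mu>" unfolding Z_def by measurable
  have "integrable \<mu> g"
    using bounded by (intro \<mu>.integrable_const_bound[where B = B]) auto
  then have "\<bar>\<mu>.expectation g\<bar> \<le> B"
    using integral_mono[of \<mu> "\<lambda>x. \<bar>g x\<bar>" "\<lambda>_. B"] bounded
    by (intro order_trans[OF integral_abs_bound]) (simp add: \<mu>.prob_space)
  then have Z_bounded: "\<bar>Z x\<bar> \<le> 2 * B" if "x \<in> space \<mu>" for x
    unfolding Z_def using bounded[OF that] by linarith
  have "integrable \<mu> Z"
    using Z_bounded by (intro \<mu>.integrable_const_bound[where B = "2 * B"]) auto
  have Z_mean: "\<mu>.expectation Z = 0" using \<open>integrable \<mu> g\<close> unfolding Z_def by (simp add: \<mu>.prob_space)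
  have cross: "(\<integral>\<omega>. Z (\<omega> i) * Z (\<omega> j) \<partial>P) = (if i = j then \<mu>.expectation (\<lambda>x. (Z x)\<^sup>2) else 0)"
    if "i < n" "j < n" for i j
    using that integral_PiM_coordinate[OF assms(1), of "\<lambda>x. (Z x)\<^sup>2" i "{..<n}"]
      integral_PiM_coordinate_product[OF assms(1), of "{..<n}" Z Z i j] Z_mean
      \<open>integrable \<mu> Z\<close> unfolding P_def by (cases "i = j") (simp_all add: power2_eq_square)
  have "(\<Sum>i<n. g (\<omega> i)) - real n * \<mu>.expectation g = (\<Sum>i<n. Z (\<omega> i))" for \<omega> :: "nat \<Rightarrow> 'a"
    unfolding Z_def by (simp add: sum_subtractf)
  then have "(\<integral>\<omega>. ((\<Sum>i<n. g (\<omega> i)) - real n * \<mu>.expectation g)\<^sup>2 \<partial>P)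
      = (\<integral>\<omega>. (\<Sum>i<n. \<Sum>j<n. Z (\<omega> i) * Z (\<omega> j)) \<partial>P)"
    by (simp add: power2_eq_square sum_product)
  also have "\<dots> = (\<Sum>i<n. \<Sum>j<n. (\<integral>\<omega>. Z (\<omega> i) * Z (\<omega> j) \<partial>P))"
  proof -
    have "(\<lambda>\<omega>. Z (\<omega> i) * Z (\<omega> j)) \<in> borel_measurable P" if "i < n" "j < n" for i j
      unfolding P_def by measurable (simp_all add: that)
    moreover have "\<bar>Z (\<omega> i) * Z (\<omega> j)\<bar> \<le> 2 * B * (2 * B)" if "\<omega> \<in> space P" "i < n" "j < n" for \<omega> i j
      using that Z_bounded order_trans[OF abs_ge_zero bounded] \<mu>.not_empty unfolding abs_mult
      by (intro mult_mono) (auto simp: P_def space_PiM)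
    ultimately have "integrable P (\<lambda>\<omega>. Z (\<omega> i) * Z (\<omega> j))" if "i < n" "j < n" for i j
      using that by (intro P.integrable_const_bound[where B = "2 * B * (2 * B)"]) auto
    then show ?thesis
      by (subst Bochner_Integration.integral_sum) (auto intro!: sum.cong Bochner_Integration.integral_sum)
  qed
  also have "\<dots> = real n * \<mu>.expectation (\<lambda>x. (Z x)\<^sup>2)"
    by (simp add: cross if_distrib sum.delta)
  finally show ?thesis unfolding P_def Z_def by simp
qed

lemma (in prob_space) variance_le_bound_mul_expectation:
  fixes g :: "'a \<Rightarrow> real"
  assumes [measurable]: "g \<in> borel_measurable M" and g_nonneg: "\<And>x. 0 \<le> g x" and g_le: "\<And>x. g x \<le> B"
  shows "variance g \<le> B * expectation g"
proof -
  have "0 \<le> B" using g_nonneg g_le order_trans by blast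
  have "integrable M g"
    using g_nonneg g_le by (intro integrable_const_bound[where B = B]) auto
  moreover have "integrable M (\<lambda>x. (g x)\<^sup>2)"
    using g_nonneg g_le \<open>0 \<le> B\<close>
    by (intro integrable_const_bound[where B = "B * B"] AE_I2) (auto simp: power2_eq_square intro!: mult_mono)
  ultimately have "variance g \<le> expectation (\<lambda>x. (g x)\<^sup>2)"
    by (simp add: variance_eq)
  also have "\<dots> \<le> expectation (\<lambda>x. B * g x)"
    using \<open>integrable M g\<close> \<open>integrable M (\<lambda>x. (g x)\<^sup>2)\<close> g_nonneg g_le
    by (intro integral_mono) (auto simp: power2_eq_square mult_right_mono)
  finally show ?thesis by simp
qed

lemma iid_mean_abs_deviation_le:
  fixes \<mu> :: "'a measure" and g :: "'a \<Rightarrow> real"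
  assumes "prob_space \<mu>" and [measurable]: "g \<in> borel_measurable \<mu>"
    and g_nonneg: "\<And>x. 0 \<le> g x" and g_le: "\<And>x. g x \<le> B" and n: "n \<noteq> 0"
  shows "(\<integral>\<^sup>+\<omega>. ennreal \<bar>(\<Sum>i<n. g (\<omega> i)) / real n - (\<integral>x. g x \<partial>\<mu>)\<bar> \<partial>PiM {..<n} (\<lambda>_. \<mu>))
           \<le> ennreal (sqrt (B * (\<integral>x. g x \<partial>\<mu>) / real n))"
proof -
  interpret \<mu>: prob_space \<mu> by (rule assms(1))
  define P where "P = PiM {..<n} (\<lambda>_. \<mu>)"
  interpret P: prob_space P unfolding P_def by (rule prob_space_PiM) (rule assms(1))
  define m where "m = \<mu>.expectation g"
  have m_nonneg: "0 \<le> m" unfolding m_def by (simp add: g_nonneg)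
  have variance_le: "\<mu>.variance g \<le> B * m"
    unfolding m_def using g_nonneg g_le by (intro \<mu>.variance_le_bound_mul_expectation) auto
  define X where "X \<omega> = (\<Sum>i<n. g (\<omega> i)) / real n - m" for \<omega>
  have X_eq: "X \<omega> = ((\<Sum>i<n. g (\<omega> i)) - real n * m) / real n" for \<omega>
    unfolding X_def using n by (simp add: field_simps)
  have [measurable]: "(\<lambda>\<omega>. g (\<omega> i)) \<in> borel_measurable P" if "i < n" for i
    unfolding P_def by measurable (simp add: that)
  have [measurable]: "X \<in> borel_measurable P" unfolding X_eq by measurable
  have "(\<integral>\<omega>. (X \<omega>)\<^sup>2 \<partial>P) = (\<integral>\<omega>. ((\<Sum>i<n. g (\<omega> i)) - real n * m)\<^sup>2 \<partial>P) / (real n)\<^sup>2"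
    unfolding X_eq by (simp add: power_divide)
  also have "\<dots> = real n * \<mu>.variance g / (real n)\<^sup>2"
    unfolding P_def m_def using g_nonneg g_le
    by (subst iid_sum_variance[where B = B]) (auto simp: \<mu>.prob_space_axioms)
  also have "\<dots> \<le> B * m / real n"
    using variance_le n by (simp add: power2_eq_square divide_right_mono)
  finally have second_moment: "(\<integral>\<omega>. (X \<omega>)\<^sup>2 \<partial>P) \<le> B * m / real n" .
  have X_bounded: "\<bar>X \<omega>\<bar> \<le> B + m" for \<omega>
  proof -
    have "0 \<le> (\<Sum>i<n. g (\<omega> i))" by (rule sum_nonneg) (rule g_nonneg)
    moreover have "(\<Sum>i<n. g (\<omega> i)) \<le> real n * B"
      using sum_bounded_above[of "{..<n}" "\<lambda>i. g (\<omega> i)" B] g_le by simp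
    moreover have "0 \<le> m * real n" using m_nonneg by simp
    ultimately show ?thesis unfolding X_eq using n by (auto simp: abs_le_iff field_simps)
  qed
  have "(X \<omega>)\<^sup>2 \<le> (B + m)\<^sup>2" for \<omega>
    using power_mono[OF X_bounded abs_ge_zero, of \<omega> 2] by simp
  then have "integrable P (\<lambda>\<omega>. (X \<omega>)\<^sup>2)"
    by (intro P.integrable_const_bound[where B = "(B + m)\<^sup>2"]) auto
  have "integrable P (\<lambda>\<omega>. \<bar>X \<omega>\<bar>)"
    using X_bounded by (intro P.integrable_const_bound[where B = "B + m"]) auto
  then have "(\<integral>\<^sup>+\<omega>. ennreal \<bar>X \<omega>\<bar> \<partial>P) = ennreal (P.expectation (\<lambda>\<omega>. \<bar>X \<omega>\<bar>))"
    by (intro nn_integral_eq_integral) auto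
  also have "P.expectation (\<lambda>\<omega>. \<bar>X \<omega>\<bar>) \<le> sqrt (B * m / real n)"
    using P.expectation_abs_le_sqrt[of X] \<open>integrable P (\<lambda>\<omega>. (X \<omega>)\<^sup>2)\<close> second_moment
    by (auto intro: order_trans)
  finally show ?thesis unfolding X_def P_def m_def by (simp add: ennreal_leI)
qed

section \<open>The copula measure and the smoothed density\<close>

lemma sets_unit_sq [measurable]: "unit_sq \<in> sets borel"
  unfolding unit_sq_def by (intro borel_closed closed_Times) auto

lemma emeasure_unit_sq: "emeasure lborel unit_sq = 1"
  unfolding unit_sq_def by (simp add: emeasure_lborel_Times)

lemma integrable_indicator_unit_sq: "integrable lborel (indicator unit_sq :: real \<times> real \<Rightarrow> real)"
  using emeasure_unit_sq by (intro integrable_real_indicator) auto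

lemma AE_unit_sq_imp_open_unit_sq: "AE q in lborel. q \<in> unit_sq \<longrightarrow> q \<in> open_unit_sq"
proof (rule AE_I')
  have "open_unit_sq \<in> sets borel"
    unfolding open_unit_sq_def by (intro borel_open open_Times) auto
  moreover have "open_unit_sq \<subseteq> unit_sq"
    unfolding open_unit_sq_def unit_sq_def by auto
  moreover have "emeasure lborel open_unit_sq = 1"
    unfolding open_unit_sq_def by (simp add: emeasure_lborel_Times)
  ultimately show "unit_sq - open_unit_sq \<in> null_sets lborel"
    by (simp add: null_sets_def emeasure_Diff emeasure_unit_sq)
qed auto

definition unit_sq_density :: "(real \<times> real \<Rightarrow> real) \<Rightarrow> real \<times> real \<Rightarrow> real" where
  "unit_sq_density c q = indicator unit_sq q * c q"

lemma integrable_unit_sq_density: "is_copula_density c \<Longrightarrow> integrable lborel (unit_sq_density c)"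
  unfolding is_copula_density_def set_integrable_def unit_sq_density_def by simp

lemma borel_measurable_unit_sq_density: "is_copula_density c \<Longrightarrow> unit_sq_density c \<in> borel_measurable borel"
  using borel_measurable_integrable[OF integrable_unit_sq_density] by simp

lemma integral_unit_sq_density: "is_copula_density c \<Longrightarrow> (\<integral>q. unit_sq_density c q \<partial>lborel) = 1"
  unfolding is_copula_density_def unit_sq_density_def unit_sq_def set_lebesgue_integral_def by auto

lemma unit_sq_density_nonneg_AE: "is_copula_density c \<Longrightarrow> AE q in lborel. 0 \<le> unit_sq_density c q"
  using AE_unit_sq_imp_open_unit_sq
  by eventually_elim (auto simp: unit_sq_density_def is_copula_density_def indicator_def)

lemma copula_measure_eq_density: "copula_measure c = density lborel (\<lambda>q. ennreal (unit_sq_density c q))"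
  unfolding copula_measure_def unit_sq_density_def
  by (intro arg_cong[where f = "density lborel"] ext) (auto simp: indicator_def)

lemma sets_copula_measure [simp, measurable_cong]: "sets (copula_measure c) = sets borel"
  unfolding copula_measure_eq_density by simp

lemma prob_space_copula_measure: "is_copula_density c \<Longrightarrow> prob_space (copula_measure c)"
proof
  assume c: "is_copula_density c"
  have "emeasure (copula_measure c) (space (copula_measure c)) = (\<integral>\<^sup>+q. ennreal (unit_sq_density c q) \<partial>lborel)"
    unfolding copula_measure_eq_density using borel_measurable_unit_sq_density[OF c]
    by (simp add: emeasure_density)
  also have "\<dots> = ennreal (\<integral>q. unit_sq_density c q \<partial>lborel)"
    using c by (intro nn_integral_eq_integral integrable_unit_sq_density unit_sq_density_nonneg_AE)
  finally show "emeasure (copula_measure c) (space (copula_measure c)) = 1"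
    using integral_unit_sq_density[OF c] by simp
qed

lemma prob_space_sample_law: "is_copula_density c \<Longrightarrow> prob_space (sample_law c n)"
  unfolding sample_law_def by (intro prob_space_PiM prob_space_copula_measure)

lemma integral_copula_measure:
  assumes c: "is_copula_density c" and [measurable]: "f \<in> borel_measurable borel"
  shows "(\<integral>q. f q \<partial>copula_measure c) = (\<integral>q. unit_sq_density c q * f q \<partial>lborel)"
  unfolding copula_measure_eq_density using c borel_measurable_unit_sq_density[OF c]
  by (subst integral_density) (auto simp: unit_sq_density_nonneg_AE)

lemma kde_nonneg: "admissible_kernel K \<Longrightarrow> 0 \<le> kde K n h \<omega> p"
  unfolding kde_def by (intro mult_nonneg_nonneg sum_nonneg) (simp_all add: admissible_kernel_nonneg)

lemma borel_measurable_kde: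
  assumes "admissible_kernel K"
  shows "(\<lambda>x. kde K n h (fst x) (snd x)) \<in> borel_measurable (sample_law c n \<Otimes>\<^sub>M lborel)"
proof -
  have [measurable]: "K \<in> borel_measurable borel" using assms by (rule borel_measurable_admissible_kernel)
  have sets: "sets (sample_law c n \<Otimes>\<^sub>M lborel)
      = sets (PiM {..<n} (\<lambda>_. borel \<Otimes>\<^sub>M borel) \<Otimes>\<^sub>M (borel \<Otimes>\<^sub>M borel :: (real \<times> real) measure))"
    unfolding sample_law_def
    by (intro sets_pair_measure_cong sets_PiM_cong) (simp_all only: sets_lborel borel_prod sets_copula_measure)
  have "(\<lambda>x. kde K n h (fst x) (snd x)) \<in> borel_measurable
      (PiM {..<n} (\<lambda>_. borel \<Otimes>\<^sub>M borel) \<Otimes>\<^sub>M (borel \<Otimes>\<^sub>M borel :: (real \<times> real) measure))"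
    unfolding kde_def by measurable
  then show ?thesis by (subst measurable_cong_sets[OF sets refl])
qed

definition smoothed_density :: "(real \<Rightarrow> real) \<Rightarrow> real \<Rightarrow> (real \<times> real \<Rightarrow> real) \<Rightarrow> real \<times> real \<Rightarrow> real" where
  "smoothed_density K h c p = (\<integral>q. product_kernel K h p q \<partial>copula_measure c)"

lemma smoothed_density_nonneg: "admissible_kernel K \<Longrightarrow> 0 \<le> smoothed_density K h c p"
  unfolding smoothed_density_def by (rule integral_nonneg_AE) (simp add: product_kernel_nonneg)

lemma integrable_unit_sq_density_product_kernel:
  assumes K: "admissible_kernel K" and Kb: "\<And>x. K x \<le> Kb" and c: "is_copula_density c"
  shows "integrable lborel (\<lambda>q. unit_sq_density c q * product_kernel K h p q)"
proof (rule Bochner_Integration.integrable_bound)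
  show "integrable lborel (\<lambda>q. Kb\<^sup>2 / h\<^sup>2 * unit_sq_density c q)"
    using integrable_unit_sq_density[OF c] by simp
  show "(\<lambda>q. unit_sq_density c q * product_kernel K h p q) \<in> borel_measurable lborel"
    using borel_measurable_unit_sq_density[OF c] measurable_Pair2[OF borel_measurable_product_kernel[OF K], of p]
    by simp
  have "\<bar>unit_sq_density c q\<bar> * product_kernel K h p q \<le> \<bar>unit_sq_density c q\<bar> * (Kb\<^sup>2 / h\<^sup>2)" for q
    by (intro mult_left_mono product_kernel_le[OF K Kb]) auto
  then show "AE q in lborel. norm (unit_sq_density c q * product_kernel K h p q) \<le> norm (Kb\<^sup>2 / h\<^sup>2 * unit_sq_density c q)"
    by (simp add: abs_mult product_kernel_nonneg[OF K] mult.commute)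
qed

lemma smoothed_density_eq:
  assumes K: "admissible_kernel K" and c: "is_copula_density c"
  shows "smoothed_density K h c p = (\<integral>q. unit_sq_density c q * product_kernel K h p q \<partial>lborel)"
  unfolding smoothed_density_def
  using measurable_Pair2[OF borel_measurable_product_kernel[OF K], of p]
  by (intro integral_copula_measure[OF c]) simp

lemma borel_measurable_smoothed_density:
  assumes K: "admissible_kernel K" and c: "is_copula_density c"
  shows "smoothed_density K h c \<in> borel_measurable borel"
proof -
  have [measurable]: "unit_sq_density c \<in> borel_measurable borel" by (rule borel_measurable_unit_sq_density[OF c])
  have [measurable]: "(\<lambda>(p, q). product_kernel K h p q) \<in> borel_measurable (lborel \<Otimes>\<^sub>M lborel)"
    using borel_measurable_product_kernel[OF K]
    by (subst measurable_cong_sets[OF sets_pair_measure_cong refl]) (simp_all only: sets_lborel)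
  have "(\<lambda>p. \<integral>q. unit_sq_density c q * product_kernel K h p q \<partial>lborel) \<in> borel_measurable lborel"
    by (rule lborel.borel_measurable_lebesgue_integral) (simp add: split_beta')
  then show ?thesis by (simp add: smoothed_density_eq[OF K c, abs_def])
qed

lemma nn_integral_smoothed_density:
  assumes K: "admissible_kernel K" and Kb: "\<And>x. K x \<le> Kb" and c: "is_copula_density c" and h: "h > 0"
  shows "(\<integral>\<^sup>+p. ennreal (smoothed_density K h c p) \<partial>lborel) = 1"
proof -
  interpret lborel_pair: pair_sigma_finite "lborel :: (real \<times> real) measure" "lborel :: (real \<times> real) measure"
    by unfold_locales
  have [measurable]: "unit_sq_density c \<in> borel_measurable borel" by (rule borel_measurable_unit_sq_density[OF c])
  have [measurable]: "(\<lambda>(p, q). product_kernel K h p q) \<in> borel_measurable (lborel \<Otimes>\<^sub>M lborel)"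
    using borel_measurable_product_kernel[OF K]
    by (subst measurable_cong_sets[OF sets_pair_measure_cong refl]) (simp_all only: sets_lborel)
  have "ennreal (smoothed_density K h c p) = (\<integral>\<^sup>+q. ennreal (unit_sq_density c q) * product_kernel K h p q \<partial>lborel)" for p
  proof -
    have "ennreal (smoothed_density K h c p) = (\<integral>\<^sup>+q. ennreal (unit_sq_density c q * product_kernel K h p q) \<partial>lborel)"
      unfolding smoothed_density_eq[OF K c]
      using integrable_unit_sq_density_product_kernel[OF K Kb c] unit_sq_density_nonneg_AE[OF c]
      by (intro nn_integral_eq_integral[symmetric]) (auto elim!: eventually_mono simp: product_kernel_nonneg[OF K])
    also have "\<dots> = (\<integral>\<^sup>+q. ennreal (unit_sq_density c q) * product_kernel K h p q \<partial>lborel)"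
      by (intro nn_integral_cong ennreal_mult'' product_kernel_nonneg[OF K])
    finally show ?thesis .
  qed
  then have "(\<integral>\<^sup>+p. ennreal (smoothed_density K h c p) \<partial>lborel)
      = (\<integral>\<^sup>+p. (\<integral>\<^sup>+q. ennreal (unit_sq_density c q) * product_kernel K h p q \<partial>lborel) \<partial>lborel)"
    by simp
  also have "\<dots> = (\<integral>\<^sup>+q. (\<integral>\<^sup>+p. ennreal (unit_sq_density c q) * product_kernel K h p q \<partial>lborel) \<partial>lborel)"
    by (rule lborel_pair.Fubini') (simp add: split_beta')
  also have "\<dots> = (\<integral>\<^sup>+q. ennreal (unit_sq_density c q) \<partial>lborel)"
    using measurable_Pair1[OF borel_measurable_product_kernel[OF K]]
    by (simp add: nn_integral_cmult product_kernel_nn_integral(1)[OF K h])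
  also have "\<dots> = ennreal (\<integral>q. unit_sq_density c q \<partial>lborel)"
    using c by (intro nn_integral_eq_integral integrable_unit_sq_density unit_sq_density_nonneg_AE)
  finally show ?thesis using integral_unit_sq_density[OF c] by simp
qed

lemma expected_abs_kde_deviation_le:
  assumes K: "admissible_kernel K" and Kb: "\<And>x. K x \<le> Kb"
    and c: "is_copula_density c" and n: "n \<noteq> 0" and h: "h > 0"
  shows "(\<integral>\<^sup>+\<omega>. ennreal \<bar>kde K n h \<omega> p - smoothed_density K h c p\<bar> \<partial>sample_law c n)
           \<le> ennreal (Kb / sqrt (real n * h\<^sup>2) * sqrt (smoothed_density K h c p))"
proof -
  have "product_kernel K h p \<in> borel_measurable (copula_measure c)"
    using measurable_Pair2[OF borel_measurable_product_kernel[OF K], of p]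
    by (simp add: measurable_cong_sets[OF sets_copula_measure refl])
  then have "(\<integral>\<^sup>+\<omega>. ennreal \<bar>kde K n h \<omega> p - smoothed_density K h c p\<bar> \<partial>sample_law c n)
      \<le> ennreal (sqrt (Kb\<^sup>2 / h\<^sup>2 * smoothed_density K h c p / real n))"
    unfolding sample_law_def kde_eq_product_kernel[OF n] smoothed_density_def
    by (intro iid_mean_abs_deviation_le prob_space_copula_measure[OF c])
       (simp_all add: n product_kernel_nonneg[OF K] product_kernel_le[OF K Kb])
  also have "sqrt (Kb\<^sup>2 / h\<^sup>2 * smoothed_density K h c p / real n)
      = Kb / sqrt (real n * h\<^sup>2) * sqrt (smoothed_density K h c p)"
    using h order_trans[OF admissible_kernel_nonneg[OF K, of 0] Kb]
    by (simp add: real_sqrt_mult real_sqrt_divide mult.commute)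
  finally show ?thesis .
qed

section \<open>The bias\<close>

lemma lipschitz_below_level_crossing:
  fixes f :: "'a::real_normed_vector \<Rightarrow> real"
  assumes "convex S" "continuous_on S f" "0 \<le> L"
    and lipschitz: "\<And>x y. x \<in> S \<Longrightarrow> y \<in> S \<Longrightarrow> f x < M \<Longrightarrow> f y < M \<Longrightarrow> \<bar>f x - f y\<bar> \<le> L * dist x y"
    and "p \<in> S" "q \<in> S" "f p < a" "a \<le> f q" "a < M"
  shows "a - f p \<le> L * dist p q"
proof -
  \<comment> \<open>The segment from \<open>p\<close> to \<open>q\<close> crosses the level \<open>a < M\<close>; the Lipschitz bound applies up to the crossing.\<close>
  define \<gamma> where "\<gamma> t = p + t *\<^sub>R (q - p)" for t :: real
  have \<gamma>_in: "\<gamma> t \<in> S" if "t \<in> {0..1}" for t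
  proof -
    have "\<gamma> t = (1 - t) *\<^sub>R p + t *\<^sub>R q" unfolding \<gamma>_def by (simp add: algebra_simps)
    then show ?thesis using \<open>convex S\<close> \<open>p \<in> S\<close> \<open>q \<in> S\<close> that by (simp add: convexD)
  qed
  have "continuous_on {0..1} (f \<circ> \<gamma>)"
    using \<gamma>_in unfolding \<gamma>_def
    by (intro continuous_on_compose continuous_intros continuous_on_subset[OF \<open>continuous_on S f\<close>]) auto
  moreover have "(f \<circ> \<gamma>) 0 \<le> a" "a \<le> (f \<circ> \<gamma>) 1" using assms(7,8) unfolding \<gamma>_def by auto
  ultimately obtain t where t: "0 \<le> t" "t \<le> 1" "f (\<gamma> t) = a"
    using IVT'[of "f \<circ> \<gamma>" 0 a 1] by auto
  then have "a - f p \<le> L * dist (\<gamma> t) p"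
    using lipschitz[OF \<gamma>_in \<open>p \<in> S\<close>] assms(7,9) by force
  also have "dist (\<gamma> t) p = t * dist p q"
    unfolding \<gamma>_def dist_norm using t by (simp add: norm_minus_commute)
  also have "L * (t * dist p q) \<le> L * dist p q"
    using t \<open>0 \<le> L\<close> by (simp add: mult_left_le_one_le mult_left_mono)
  finally show ?thesis .
qed

lemma copula_class_level_crossing:
  assumes "c \<in> copula_class M M1" "M1 > 0" "p \<in> open_unit_sq" "q \<in> open_unit_sq"
    and "c p < a" "a \<le> c q" "a < M"
  shows "a - c p \<le> M1 * dist p q"
proof (rule lipschitz_below_level_crossing)
  show "convex open_unit_sq"
    unfolding open_unit_sq_def by (intro convex_Times convex_real_interval)
qed (use assms in \<open>auto simp: copula_class_def\<close>)

lemma copula_class_lipschitz_near_moderate: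
  assumes cl: "c \<in> copula_class M M1" and M: "M > 1" "M1 > 0"
    and pq: "p \<in> open_unit_sq" "q \<in> open_unit_sq" and close: "8 * (M1 * dist p q) \<le> M - 1"
    and moderate: "2 * c p < M + 1"
  shows "\<bar>c q - c p\<bar> \<le> M1 * dist p q"
proof -
  \<comment> \<open>Reaching the level \<open>(3M + 1)/4 < M\<close> from below \<open>(M + 1)/2\<close> costs more than \<open>(M - 1)/8\<close>.\<close>
  have level: "4 * ((3 * M + 1) / 4) = 3 * M + 1" by simp
  have "c q < (3 * M + 1) / 4"
  proof (rule ccontr)
    assume "\<not> c q < (3 * M + 1) / 4"
    then have "(3 * M + 1) / 4 - c p \<le> M1 * dist p q"
      using moderate M level by (intro copula_class_level_crossing[OF cl M(2) pq]) linarith+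
    then show False using moderate close level M by linarith
  qed
  then have "c q < M" using M level by linarith
  then show ?thesis
    using cl pq moderate M unfolding copula_class_def by (auto simp: dist_commute)
qed

lemma copula_class_ge_one_near_large:
  assumes cl: "c \<in> copula_class M M1" and M: "M > 1" "M1 > 0"
    and pq: "p \<in> open_unit_sq" "q \<in> open_unit_sq" and close: "8 * (M1 * dist p q) \<le> M - 1"
    and large: "M + 1 \<le> 2 * c p"
  shows "1 \<le> c q"
proof (rule ccontr)
  assume "\<not> 1 \<le> c q"
  have level: "2 * ((M + 1) / 2) = M + 1" by simp
  then have "(M + 1) / 2 - c q \<le> M1 * dist q p"
    using \<open>\<not> 1 \<le> c q\<close> large M by (intro copula_class_level_crossing[OF cl M(2) pq(2,1)]) linarith+
  then show False using \<open>\<not> 1 \<le> c q\<close> close level M by (simp add: dist_commute)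
qed

lemma smoothed_density_ge:
  assumes K: "admissible_kernel K" and Kb: "\<And>x. K x \<le> Kb" and c: "is_copula_density c" and h: "h > 0"
    and lower: "\<And>q. product_kernel K h p q \<noteq> 0 \<Longrightarrow> a \<le> unit_sq_density c q"
  shows "a \<le> smoothed_density K h c p"
proof -
  have "a = (\<integral>q. a * product_kernel K h p q \<partial>lborel)"
    using product_kernel_integral[OF K h] by simp
  also have "\<dots> \<le> (\<integral>q. unit_sq_density c q * product_kernel K h p q \<partial>lborel)"
  proof (intro integral_mono)
    show "a * product_kernel K h p q \<le> unit_sq_density c q * product_kernel K h p q" for q
      using lower[of q] by (cases "product_kernel K h p q = 0") (simp_all add: mult_right_mono product_kernel_nonneg[OF K])
  qed (use product_kernel_integral[OF K h] integrable_unit_sq_density_product_kernel[OF K Kb c] in auto)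
  finally show ?thesis by (simp add: smoothed_density_eq[OF K c])
qed

lemma smoothed_density_le:
  assumes K: "admissible_kernel K" and Kb: "\<And>x. K x \<le> Kb" and c: "is_copula_density c" and h: "h > 0"
    and upper: "\<And>q. product_kernel K h p q \<noteq> 0 \<Longrightarrow> unit_sq_density c q \<le> b"
  shows "smoothed_density K h c p \<le> b"
proof -
  have "(\<integral>q. unit_sq_density c q * product_kernel K h p q \<partial>lborel) \<le> (\<integral>q. b * product_kernel K h p q \<partial>lborel)"
  proof (intro integral_mono)
    show "unit_sq_density c q * product_kernel K h p q \<le> b * product_kernel K h p q" for q
      using upper[of q] by (cases "product_kernel K h p q = 0") (simp_all add: mult_right_mono product_kernel_nonneg[OF K])
  qed (use product_kernel_integral[OF K h] integrable_unit_sq_density_product_kernel[OF K Kb c] in auto)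
  also have "\<dots> = b"
    using product_kernel_integral[OF K h] by simp
  finally show ?thesis by (simp add: smoothed_density_eq[OF K c])
qed

definition inner_square :: "real \<Rightarrow> (real \<times> real) set" where
  "inner_square h = {h<..<1-h} \<times> {h<..<1-h}"

lemma sets_inner_square [measurable]: "inner_square h \<in> sets borel"
  unfolding inner_square_def by (intro borel_open open_Times) auto

lemma product_kernel_support_inner_square:
  assumes K: "admissible_kernel K" and h: "h > 0"
    and p: "p \<in> inner_square h" and nonzero: "product_kernel K h p q \<noteq> 0"
  shows "q \<in> open_unit_sq" "dist p q \<le> 2 * h"
proof -
  have "\<bar>fst p - fst q\<bar> \<le> h" "\<bar>snd p - snd q\<bar> \<le> h"
    using product_kernel_support[OF K h nonzero] by auto
  moreover have "dist p q \<le> \<bar>fst p - fst q\<bar> + \<bar>snd p - snd q\<bar>"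
    using dist_Pair_Pair[of "fst p" "snd p" "fst q" "snd q"]
      sqrt_sum_squares_le_sum_abs[of "fst p - fst q" "snd p - snd q"]
    by (simp add: dist_real_def)
  ultimately show "q \<in> open_unit_sq" "dist p q \<le> 2 * h"
    using p unfolding inner_square_def open_unit_sq_def by (auto simp: mem_Times_iff abs_le_iff)
qed

lemma positive_part_one_minus_lipschitz: "\<bar>max 0 (1 - a) - max 0 (1 - b)\<bar> \<le> \<bar>a - (b::real)\<bar>"
  by (auto simp: max_def)

lemma smoothed_density_bias_inner_square:
  assumes cl: "c \<in> copula_class M M1" and M: "M > 1" "M1 > 0"
    and K: "admissible_kernel K" and Kb: "\<And>x. K x \<le> Kb"
    and h: "0 < h" "h \<le> (M - 1) / (16 * M1)" and p: "p \<in> inner_square h"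
  shows "\<bar>max 0 (1 - smoothed_density K h c p) - max 0 (1 - c p)\<bar> \<le> 2 * M1 * h"
proof -
  have c: "is_copula_density c" using cl by (simp add: copula_class_def)
  have p_open: "p \<in> open_unit_sq"
    using p h unfolding inner_square_def open_unit_sq_def by auto
  have "16 * (M1 * h) \<le> M - 1" using h M by (simp add: field_simps)
  have window: "q \<in> open_unit_sq" "M1 * dist p q \<le> 2 * M1 * h" "8 * (M1 * dist p q) \<le> M - 1"
    "unit_sq_density c q = c q" if "product_kernel K h p q \<noteq> 0" for q
  proof -
    show q: "q \<in> open_unit_sq" "M1 * dist p q \<le> 2 * M1 * h"
      using product_kernel_support_inner_square[OF K h(1) p that] M(2) by auto
    show "8 * (M1 * dist p q) \<le> M - 1"
      using q(2) \<open>16 * (M1 * h) \<le> M - 1\<close> by linarith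
    show "unit_sq_density c q = c q" using q(1) by (auto simp: unit_sq_density_def unit_sq_def open_unit_sq_def)
  qed
  show ?thesis
  proof (cases "2 * c p < M + 1")
    case True
    then have near: "\<bar>unit_sq_density c q - c p\<bar> \<le> 2 * M1 * h" if "product_kernel K h p q \<noteq> 0" for q
      using copula_class_lipschitz_near_moderate[OF cl M p_open window(1,3)[OF that]] window(2,4)[OF that]
      by simp
    have "c p - 2 * M1 * h \<le> smoothed_density K h c p" "smoothed_density K h c p \<le> c p + 2 * M1 * h"
      using near by (intro smoothed_density_ge[OF K Kb c h(1)] smoothed_density_le[OF K Kb c h(1)];
          simp add: abs_diff_le_iff)+
    then have "\<bar>smoothed_density K h c p - c p\<bar> \<le> 2 * M1 * h" by (simp add: abs_diff_le_iff)
    with positive_part_one_minus_lipschitz show ?thesis by (rule order_trans)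
  next
    case False
    then have "1 \<le> unit_sq_density c q" if "product_kernel K h p q \<noteq> 0" for q
      using copula_class_ge_one_near_large[OF cl M p_open window(1,3)[OF that]] window(4)[OF that] by simp
    then have "1 \<le> smoothed_density K h c p" by (rule smoothed_density_ge[OF K Kb c h(1)])
    moreover have "1 \<le> c p" using False M by linarith
    ultimately show ?thesis using M h by simp
  qed
qed

lemma emeasure_unit_sq_minus_inner_square:
  assumes "0 \<le> h"
  shows "emeasure lborel (unit_sq - inner_square h) \<le> ennreal (4 * h)"
proof -
  define S1 where "S1 = {0..h} \<times> {0..1::real}"
  define S2 where "S2 = {1-h..1} \<times> {0..1::real}"
  define S3 where "S3 = {0..1::real} \<times> {0..h}"
  define S4 where "S4 = {0..1::real} \<times> {1-h..1}"
  have [measurable]: "S1 \<in> sets borel" "S2 \<in> sets borel" "S3 \<in> sets borel" "S4 \<in> sets borel"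
    unfolding S1_def S2_def S3_def S4_def by (intro borel_closed closed_Times; simp)+
  have "unit_sq - inner_square h \<subseteq> S1 \<union> S2 \<union> S3 \<union> S4"
    by (auto simp: unit_sq_def inner_square_def S1_def S2_def S3_def S4_def)
  then have "emeasure lborel (unit_sq - inner_square h) \<le> emeasure lborel (S1 \<union> S2 \<union> S3 \<union> S4)"
    by (rule emeasure_mono) simp
  also have "\<dots> \<le> emeasure lborel S1 + emeasure lborel S2 + emeasure lborel S3 + emeasure lborel S4"
    by (intro order_trans[OF emeasure_subadditive] add_right_mono) auto
  also have "\<dots> = ennreal (4 * h)"
    using assms by (simp add: S1_def S2_def S3_def S4_def emeasure_lborel_Times ennreal_plus[symmetric]
        del: ennreal_plus)
  finally show ?thesis .
qed

lemma Ccor_eq_integral_positive_part: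
  assumes c: "is_copula_density c"
  shows "Ccor c = (\<integral>p. indicator unit_sq p * max 0 (1 - unit_sq_density c p) \<partial>lborel)"
proof -
  have [measurable]: "unit_sq_density c \<in> borel_measurable borel" by (rule borel_measurable_unit_sq_density[OF c])
  have "indicator unit_sq p *\<^sub>R \<bar>c p - 1\<bar>
      = 2 * (indicator unit_sq p * max 0 (1 - unit_sq_density c p)) + (unit_sq_density c p - indicator unit_sq p)" for p
    unfolding unit_sq_density_def by (auto simp: indicator_def max_def)
  moreover have "integrable lborel (\<lambda>p. indicator unit_sq p * max 0 (1 - unit_sq_density c p))"
    using unit_sq_density_nonneg_AE[OF c]
    by (intro Bochner_Integration.integrable_bound[OF integrable_indicator_unit_sq])
       (auto elim!: eventually_mono simp: indicator_def)
  ultimately show ?thesis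
    using integrable_unit_sq_density[OF c] integrable_indicator_unit_sq
    by (simp add: Ccor_def set_lebesgue_integral_def integral_unit_sq_density[OF c] emeasure_unit_sq measure_def)
qed

lemma nn_integral_bias_le:
  assumes cl: "c \<in> copula_class M M1" and M: "M > 1" "M1 > 0"
    and K: "admissible_kernel K" and Kb: "\<And>x. K x \<le> Kb"
    and h: "0 < h" "h \<le> (M - 1) / (16 * M1)"
  shows "(\<integral>\<^sup>+p. indicator unit_sq p *
           ennreal \<bar>max 0 (1 - smoothed_density K h c p) - max 0 (1 - unit_sq_density c p)\<bar> \<partial>lborel)
         \<le> ennreal ((4 + 2 * M1) * h)"
proof -
  have c: "is_copula_density c" using cl unfolding copula_class_def by auto
  have "AE p in lborel. indicator unit_sq p *
          ennreal \<bar>max 0 (1 - smoothed_density K h c p) - max 0 (1 - unit_sq_density c p)\<bar>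
        \<le> indicator (unit_sq - inner_square h) p + ennreal (2 * M1 * h) * indicator unit_sq p"
    using AE_unit_sq_imp_open_unit_sq
  proof eventually_elim
    case (elim p)
    show ?case
    proof (cases "p \<in> unit_sq")
      case True
      then have "unit_sq_density c p = c p" by (simp add: unit_sq_density_def)
      show ?thesis
      proof (cases "p \<in> inner_square h")
        case True
        then show ?thesis
          using smoothed_density_bias_inner_square[OF cl M K Kb h True] \<open>p \<in> unit_sq\<close>
            \<open>unit_sq_density c p = c p\<close> by (simp add: ennreal_leI)
      next
        case False
        have "0 \<le> c p" using c elim \<open>p \<in> unit_sq\<close> by (simp add: is_copula_density_def)
        then have "\<bar>max 0 (1 - smoothed_density K h c p) - max 0 (1 - unit_sq_density c p)\<bar> \<le> 1"
          using smoothed_density_nonneg[OF K, of h c p] \<open>unit_sq_density c p = c p\<close> by (auto simp: max_def)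
        then have "ennreal \<bar>max 0 (1 - smoothed_density K h c p) - max 0 (1 - unit_sq_density c p)\<bar>
            \<le> 1 + ennreal (2 * M1 * h)"
          by (intro add_increasing2) (simp_all add: ennreal_leI)
        then show ?thesis using False \<open>p \<in> unit_sq\<close> by simp
      qed
    qed simp
  qed
  then have "(\<integral>\<^sup>+p. indicator unit_sq p *
           ennreal \<bar>max 0 (1 - smoothed_density K h c p) - max 0 (1 - unit_sq_density c p)\<bar> \<partial>lborel)
      \<le> (\<integral>\<^sup>+p. indicator (unit_sq - inner_square h) p + ennreal (2 * M1 * h) * indicator unit_sq p \<partial>lborel)"
    by (rule nn_integral_mono_AE)
  also have "\<dots> = emeasure lborel (unit_sq - inner_square h) + ennreal (2 * M1 * h)"
    by (subst nn_integral_add) (auto simp: nn_integral_cmult emeasure_unit_sq)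
  also have "\<dots> \<le> ennreal (4 * h) + ennreal (2 * M1 * h)"
    using emeasure_unit_sq_minus_inner_square h by (simp add: add_right_mono)
  also have "\<dots> = ennreal ((4 + 2 * M1) * h)"
    using h M by (simp add: ennreal_plus[symmetric] algebra_simps del: ennreal_plus)
  finally show ?thesis .
qed

section \<open>Risk bound and rates\<close>

lemma Ccor_hat_error_le:
  assumes K: "admissible_kernel K" and c: "is_copula_density c"
  shows "ennreal \<bar>Ccor_hat K n h \<omega> - Ccor c\<bar>
     \<le> (\<integral>\<^sup>+p. indicator unit_sq p * ennreal \<bar>kde K n h \<omega> p - smoothed_density K h c p\<bar> \<partial>lborel)
      + (\<integral>\<^sup>+p. indicator unit_sq p *
           ennreal \<bar>max 0 (1 - smoothed_density K h c p) - max 0 (1 - unit_sq_density c p)\<bar> \<partial>lborel)"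
proof -
  have [measurable]: "unit_sq_density c \<in> borel_measurable borel" by (rule borel_measurable_unit_sq_density[OF c])
  have [measurable]: "K \<in> borel_measurable borel" using K by (rule borel_measurable_admissible_kernel)
  have [measurable]: "kde K n h \<omega> \<in> borel_measurable borel"
    unfolding kde_def[abs_def] borel_prod[symmetric] by measurable
  have [measurable]: "smoothed_density K h c \<in> borel_measurable borel"
    by (rule borel_measurable_smoothed_density[OF K c])
  define L where "L p = indicator unit_sq p * max 0 (1 - kde K n h \<omega> p)" for p
  define R where "R p = indicator unit_sq p * max 0 (1 - unit_sq_density c p)" for p
  have "integrable lborel L"
    using kde_nonneg[OF K] unfolding L_def
    by (intro Bochner_Integration.integrable_bound[OF integrable_indicator_unit_sq]) (auto simp: indicator_def)
  moreover have "integrable lborel R"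
    using unit_sq_density_nonneg_AE[OF c] unfolding R_def
    by (intro Bochner_Integration.integrable_bound[OF integrable_indicator_unit_sq])
       (auto elim!: eventually_mono simp: indicator_def)
  moreover have "Ccor_hat K n h \<omega> - Ccor c = (\<integral>p. L p \<partial>lborel) - (\<integral>p. R p \<partial>lborel)"
    unfolding Ccor_hat_def Ccor_eq_integral_positive_part[OF c] set_lebesgue_integral_def L_def R_def by simp
  ultimately have "ennreal \<bar>Ccor_hat K n h \<omega> - Ccor c\<bar> \<le> (\<integral>\<^sup>+p. ennreal \<bar>L p - R p\<bar> \<partial>lborel)"
    using integral_norm_bound_ennreal[of lborel "\<lambda>p. L p - R p"] by simp
  also have "\<dots> \<le> (\<integral>\<^sup>+p. indicator unit_sq p * ennreal \<bar>kde K n h \<omega> p - smoothed_density K h c p\<bar>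
      + indicator unit_sq p * ennreal \<bar>max 0 (1 - smoothed_density K h c p) - max 0 (1 - unit_sq_density c p)\<bar> \<partial>lborel)"
  proof (rule nn_integral_mono)
    fix p
    have "\<bar>max 0 (1 - kde K n h \<omega> p) - max 0 (1 - unit_sq_density c p)\<bar>
        \<le> \<bar>kde K n h \<omega> p - smoothed_density K h c p\<bar>
          + \<bar>max 0 (1 - smoothed_density K h c p) - max 0 (1 - unit_sq_density c p)\<bar>"
      using positive_part_one_minus_lipschitz[of "kde K n h \<omega> p" "smoothed_density K h c p"] by linarith
    then show "ennreal \<bar>L p - R p\<bar> \<le> indicator unit_sq p * ennreal \<bar>kde K n h \<omega> p - smoothed_density K h c p\<bar>
      + indicator unit_sq p * ennreal \<bar>max 0 (1 - smoothed_density K h c p) - max 0 (1 - unit_sq_density c p)\<bar>"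
      unfolding L_def R_def by (cases "p \<in> unit_sq") (simp_all add: ennreal_plus[symmetric] ennreal_leI del: ennreal_plus)
  qed
  also have "\<dots> = (\<integral>\<^sup>+p. indicator unit_sq p * ennreal \<bar>kde K n h \<omega> p - smoothed_density K h c p\<bar> \<partial>lborel)
      + (\<integral>\<^sup>+p. indicator unit_sq p *
           ennreal \<bar>max 0 (1 - smoothed_density K h c p) - max 0 (1 - unit_sq_density c p)\<bar> \<partial>lborel)"
    by (rule nn_integral_add) auto
  finally show ?thesis .
qed

lemma borel_measurable_stochastic_error:
  assumes K: "admissible_kernel K" and c: "is_copula_density c"
  shows "(\<lambda>x. indicator unit_sq (snd x) * ennreal \<bar>kde K n h (fst x) (snd x) - smoothed_density K h c (snd x)\<bar>)
    \<in> borel_measurable (sample_law c n \<Otimes>\<^sub>M lborel)"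
proof -
  have [measurable]: "smoothed_density K h c \<in> borel_measurable borel"
    by (rule borel_measurable_smoothed_density[OF K c])
  have [measurable]: "(\<lambda>x. kde K n h (fst x) (snd x)) \<in> borel_measurable (sample_law c n \<Otimes>\<^sub>M lborel)"
    by (rule borel_measurable_kde[OF K])
  show ?thesis by measurable
qed

lemma nn_integral_stochastic_error_le:
  assumes K: "admissible_kernel K" and Kb: "\<And>x. K x \<le> Kb"
    and c: "is_copula_density c" and n: "n \<noteq> 0" and h: "h > 0"
  shows "(\<integral>\<^sup>+\<omega>. (\<integral>\<^sup>+p. indicator unit_sq p * ennreal \<bar>kde K n h \<omega> p - smoothed_density K h c p\<bar> \<partial>lborel)
           \<partial>sample_law c n) \<le> ennreal (Kb / sqrt (real n * h\<^sup>2))"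
proof -
  define P where "P = sample_law c n"
  define s where "s = Kb / sqrt (real n * h\<^sup>2)"
  define F where "F \<omega> p = indicator unit_sq p * ennreal \<bar>kde K n h \<omega> p - smoothed_density K h c p\<bar>" for \<omega> p
  interpret P: prob_space P unfolding P_def by (rule prob_space_sample_law[OF c])
  interpret pair_sigma_finite P "lborel :: (real \<times> real) measure" by unfold_locales
  have s_nonneg: "0 \<le> s"
    unfolding s_def using order_trans[OF admissible_kernel_nonneg[OF K, of 0] Kb] by simp
  have pointwise: "(\<integral>\<^sup>+\<omega>. F \<omega> p \<partial>P)
      \<le> ennreal (s / 2) * (indicator unit_sq p * ennreal (smoothed_density K h c p) + indicator unit_sq p)" for p
  proof (cases "p \<in> unit_sq")
    case True
    define m where "m = smoothed_density K h c p"
    have m_nonneg: "0 \<le> m" unfolding m_def by (rule smoothed_density_nonneg[OF K])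
    have "(\<integral>\<^sup>+\<omega>. F \<omega> p \<partial>P) = (\<integral>\<^sup>+\<omega>. ennreal \<bar>kde K n h \<omega> p - m\<bar> \<partial>P)"
      using True by (simp add: F_def m_def)
    also have "\<dots> \<le> ennreal (s * sqrt m)"
      unfolding P_def s_def m_def by (rule expected_abs_kde_deviation_le[OF K Kb c n h])
    also have "\<dots> \<le> ennreal (s * ((m + 1) / 2))"
      using arith_geo_mean_sqrt[of m 1] m_nonneg s_nonneg by (intro ennreal_leI mult_left_mono) simp_all
    also have "ennreal (s * ((m + 1) / 2)) = ennreal (s / 2) * ennreal (m + 1)"
      using ennreal_mult[of "s / 2" "m + 1"] s_nonneg m_nonneg by (simp add: ac_simps)
    also have "ennreal (m + 1) = ennreal m + 1" using m_nonneg by simp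
    finally show ?thesis using True by (simp add: m_def)
  qed (simp add: F_def)
  have "(\<integral>\<^sup>+\<omega>. (\<integral>\<^sup>+p. F \<omega> p \<partial>lborel) \<partial>P) = (\<integral>\<^sup>+p. (\<integral>\<^sup>+\<omega>. F \<omega> p \<partial>P) \<partial>lborel)"
    using borel_measurable_stochastic_error[OF K c] unfolding P_def F_def
    by (intro Fubini'[unfolded P_def, symmetric]) (simp add: split_beta')
  also have "\<dots> \<le> (\<integral>\<^sup>+p. ennreal (s / 2) *
      (indicator unit_sq p * ennreal (smoothed_density K h c p) + indicator unit_sq p) \<partial>lborel)"
    by (intro nn_integral_mono pointwise)
  also have "\<dots> = ennreal (s / 2) *
      ((\<integral>\<^sup>+p. indicator unit_sq p * ennreal (smoothed_density K h c p) \<partial>lborel) + 1)"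
    using borel_measurable_smoothed_density[OF K c]
    by (simp add: nn_integral_cmult nn_integral_add emeasure_unit_sq)
  also have "\<dots> \<le> ennreal (s / 2) * (1 + 1)"
  proof -
    have "(\<integral>\<^sup>+p. indicator unit_sq p * ennreal (smoothed_density K h c p) \<partial>lborel)
        \<le> (\<integral>\<^sup>+p. ennreal (smoothed_density K h c p) \<partial>lborel)"
      by (intro nn_integral_mono) (simp add: indicator_def)
    then show ?thesis
      using nn_integral_smoothed_density[OF K Kb c h] by (intro mult_left_mono add_right_mono) auto
  qed
  also have "\<dots> = ennreal s"
    using ennreal_mult''[of 2 "s / 2"] by simp
  finally show ?thesis unfolding P_def F_def s_def .
qed

lemma risk_le:
  assumes cl: "c \<in> copula_class M M1" and M: "M > 1" "M1 > 0"
    and K: "admissible_kernel K" and Kb: "\<And>x. K x \<le> Kb"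
    and n: "n \<noteq> 0" and h: "0 < h" "h \<le> (M - 1) / (16 * M1)"
  shows "risk K c n h \<le> ennreal ((4 + 2 * M1) * h + Kb / sqrt (real n * h\<^sup>2))"
proof -
  have c: "is_copula_density c" using cl unfolding copula_class_def by auto
  interpret prob_space "sample_law c n" by (rule prob_space_sample_law[OF c])
  have "risk K c n h \<le> (\<integral>\<^sup>+\<omega>.
      (\<integral>\<^sup>+p. indicator unit_sq p * ennreal \<bar>kde K n h \<omega> p - smoothed_density K h c p\<bar> \<partial>lborel)
      + (\<integral>\<^sup>+p. indicator unit_sq p *
           ennreal \<bar>max 0 (1 - smoothed_density K h c p) - max 0 (1 - unit_sq_density c p)\<bar> \<partial>lborel)
      \<partial>sample_law c n)"
    unfolding risk_def by (intro nn_integral_mono Ccor_hat_error_le[OF K c])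
  also have "\<dots> = (\<integral>\<^sup>+\<omega>.
      (\<integral>\<^sup>+p. indicator unit_sq p * ennreal \<bar>kde K n h \<omega> p - smoothed_density K h c p\<bar> \<partial>lborel)
      \<partial>sample_law c n)
      + (\<integral>\<^sup>+p. indicator unit_sq p *
           ennreal \<bar>max 0 (1 - smoothed_density K h c p) - max 0 (1 - unit_sq_density c p)\<bar> \<partial>lborel)"
    using lborel.borel_measurable_nn_integral_fst[OF borel_measurable_stochastic_error[OF K c]]
    by (subst nn_integral_add) (auto simp: emeasure_space_1)
  also have "\<dots> \<le> ennreal (Kb / sqrt (real n * h\<^sup>2)) + ennreal ((4 + 2 * M1) * h)"
    by (intro add_mono nn_integral_stochastic_error_le[OF K Kb c n h(1)] nn_integral_bias_le[OF cl M K Kb h])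
  also have "\<dots> = ennreal ((4 + 2 * M1) * h + Kb / sqrt (real n * h\<^sup>2))"
    using h M order_trans[OF admissible_kernel_nonneg[OF K, of 0] Kb]
    by (simp add: ennreal_plus[symmetric] add.commute del: ennreal_plus)
  finally show ?thesis .
qed

lemma uniform_risk_bound:
  assumes M: "M > 1" "M1 > 0" and K: "admissible_kernel K"
  obtains Kb where "Kb > 0"
    "\<And>n h. n \<ge> 1 \<Longrightarrow> 0 < h \<Longrightarrow> h \<le> (M - 1) / (16 * M1) \<Longrightarrow>
       (SUP c\<in>copula_class M M1. risk K c n h) \<le> ennreal ((4 + 2 * M1) * h + Kb / sqrt (real n * h\<^sup>2))"
proof -
  obtain Kb where "Kb > 0" "\<And>x. K x \<le> Kb" using admissible_kernel_bounded[OF K] by blast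
  then show ?thesis
    using risk_le[OF _ M K] by (intro that[of Kb] SUP_least) auto
qed

lemma risk_bound_tendsto_zero:
  fixes R :: "nat \<Rightarrow> real \<Rightarrow> ennreal"
  assumes bound: "\<And>n h. n \<ge> 1 \<Longrightarrow> 0 < h \<Longrightarrow> h \<le> h0 \<Longrightarrow>
      R n h \<le> ennreal (A * h + B / sqrt (real n * h\<^sup>2) + C / (real n * h\<^sup>2))"
    and "h0 > 0" and hs: "\<forall>n. hs n > 0" "hs \<longlonglongrightarrow> 0"
    and nh2: "filterlim (\<lambda>n. real n * (hs n)\<^sup>2) at_top sequentially"
  shows "(\<lambda>n. R n (hs n)) \<longlonglongrightarrow> 0"
proof (rule tendsto_sandwich[OF _ _ tendsto_const])
  define g where "g n = A * hs n + B / sqrt (real n * (hs n)\<^sup>2) + C / (real n * (hs n)\<^sup>2)" for n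
  have "(\<lambda>n. B / sqrt (real n * (hs n)\<^sup>2)) \<longlonglongrightarrow> 0"
    by (intro tendsto_divide_0[OF tendsto_const] filterlim_at_top_imp_at_infinity
        filterlim_compose[OF sqrt_at_top nh2])
  moreover have "(\<lambda>n. C / (real n * (hs n)\<^sup>2)) \<longlonglongrightarrow> 0"
    by (intro tendsto_divide_0[OF tendsto_const] filterlim_at_top_imp_at_infinity[OF nh2])
  ultimately have "g \<longlonglongrightarrow> A * 0 + 0 + 0"
    unfolding g_def[abs_def] by (intro tendsto_add tendsto_mult tendsto_const hs)
  then show "(\<lambda>n. ennreal (g n)) \<longlonglongrightarrow> 0"
    using tendsto_ennrealI[of g 0] by simp
  have "\<forall>\<^sub>F n in sequentially. hs n < h0 \<and> n \<ge> 1"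
    using order_tendstoD(2)[OF hs(2) \<open>h0 > 0\<close>] eventually_ge_at_top[of 1] by eventually_elim auto
  then show "\<forall>\<^sub>F n in sequentially. R n (hs n) \<le> ennreal (g n)"
    by eventually_elim (use bound hs(1) in \<open>auto simp: g_def\<close>)
qed simp

lemma quarter_power_bandwidth:
  fixes x :: real
  assumes "x \<ge> 1"
  shows "1 / sqrt (x * (x powr (-1/4))\<^sup>2) = x powr (-1/4)" "1 / (x * (x powr (-1/4))\<^sup>2) \<le> x powr (-1/4)"
proof -
  have "(x powr (-1/4))\<^sup>2 = x powr (-1/2)"
    by (simp add: power2_eq_square powr_add[symmetric])
  then have sq: "x * (x powr (-1/4))\<^sup>2 = x powr (1/2)"
    using assms powr_add[of x 1 "-1/2"] by simp
  have "sqrt (x powr (1/2)) = x powr (1/4)"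
    using assms by (simp add: powr_half_sqrt[symmetric] powr_powr)
  then show "1 / sqrt (x * (x powr (-1/4))\<^sup>2) = x powr (-1/4)"
    unfolding sq by (simp add: powr_minus_divide)
  have "1 / (x * (x powr (-1/4))\<^sup>2) = x powr (-1/2)"
    unfolding sq by (simp add: powr_minus_divide)
  also have "\<dots> \<le> x powr (-1/4)"
    using assms by (intro powr_mono) auto
  finally show "1 / (x * (x powr (-1/4))\<^sup>2) \<le> x powr (-1/4)" .
qed

lemma risk_bound_quarter_power_rate:
  fixes R :: "nat \<Rightarrow> real \<Rightarrow> ennreal"
  assumes bound: "\<And>n h. n \<ge> 1 \<Longrightarrow> 0 < h \<Longrightarrow> h \<le> h0 \<Longrightarrow>
      R n h \<le> ennreal (A * h + B / sqrt (real n * h\<^sup>2) + C / (real n * h\<^sup>2))"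
    and "h0 > 0" "0 \<le> C"
  shows "\<forall>\<^sub>F n in sequentially. R n (real n powr (-1/4)) \<le> ennreal ((A + B + C) * real n powr (-1/4))"
proof -
  have "(\<lambda>n. real n powr (-1/4)) \<longlonglongrightarrow> 0"
    by (intro tendsto_neg_powr filterlim_real_sequentially) auto
  have "\<forall>\<^sub>F n in sequentially. real n powr (-1/4) < h0 \<and> n \<ge> 1"
    using order_tendstoD(2)[OF \<open>(\<lambda>n. real n powr (-1/4)) \<longlonglongrightarrow> 0\<close> \<open>h0 > 0\<close>] eventually_ge_at_top[of 1] by eventually_elim auto
  then show ?thesis
  proof eventually_elim
    case (elim n)
    define h where "h = real n powr (-1/4)"
    have n: "real n \<ge> 1" using elim by simp
    have "B / sqrt (real n * h\<^sup>2) = B * (1 / sqrt (real n * h\<^sup>2))" by simp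
    also have "\<dots> = B * h" using quarter_power_bandwidth(1)[OF n] unfolding h_def by simp
    finally have "B / sqrt (real n * h\<^sup>2) = B * h" .
    moreover have "C / (real n * h\<^sup>2) \<le> C * h"
      using mult_left_mono[OF quarter_power_bandwidth(2)[OF n] \<open>0 \<le> C\<close>] unfolding h_def by simp
    ultimately have "A * h + B / sqrt (real n * h\<^sup>2) + C / (real n * h\<^sup>2) \<le> (A + B + C) * h"
      by (simp add: distrib_right)
    moreover have "R n h \<le> ennreal (A * h + B / sqrt (real n * h\<^sup>2) + C / (real n * h\<^sup>2))"
      using elim n unfolding h_def by (intro bound) auto
    ultimately show ?case unfolding h_def by (meson ennreal_leI order_trans)
  qed
qed

theorem theorem2:
  fixes M M1 :: real and K :: "real \<Rightarrow> real"
  assumes "M > 1" and "M1 > 0" and "admissible_kernel K"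
  shows "(\<exists>A B M5 h0. A > 0 \<and> B > 0 \<and> M5 > 0 \<and> h0 > 0 \<and>
            (\<forall>n::nat. n \<ge> 1 \<longrightarrow> (\<forall>h. 0 < h \<and> h \<le> h0 \<longrightarrow>
               (SUP c\<in>copula_class M M1. risk K c n h)
                 \<le> ennreal (A * h + B / sqrt (real n * h\<^sup>2) + M5 / (real n * h\<^sup>2)))))
       \<and> (\<forall>hs :: nat \<Rightarrow> real. (\<forall>n. hs n > 0) \<longrightarrow> hs \<longlonglongrightarrow> 0 \<longrightarrow>
            filterlim (\<lambda>n. real n * (hs n)\<^sup>2) at_top sequentially \<longrightarrow>
            (\<lambda>n. SUP c\<in>copula_class M M1. risk K c n (hs n)) \<longlonglongrightarrow> 0)
       \<and> (\<exists>D. \<forall>\<^sub>F n in sequentially.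
            (SUP c\<in>copula_class M M1. risk K c n (real n powr (-1/4)))
              \<le> ennreal (D * real n powr (-1/4)))"
proof -
  obtain B where "B > 0" and risk_bound: "\<And>n h. n \<ge> 1 \<Longrightarrow> 0 < h \<Longrightarrow> h \<le> (M - 1) / (16 * M1) \<Longrightarrow>
      (SUP c\<in>copula_class M M1. risk K c n h) \<le> ennreal ((4 + 2 * M1) * h + B / sqrt (real n * h\<^sup>2))"
    using uniform_risk_bound[OF assms] by blast
  define A where "A = 4 + 2 * M1"
  define h0 where "h0 = (M - 1) / (16 * M1)"
  have "A > 0" "h0 > 0" using assms unfolding A_def h0_def by simp_all
  have bound: "(SUP c\<in>copula_class M M1. risk K c n h)
      \<le> ennreal (A * h + B / sqrt (real n * h\<^sup>2) + 1 / (real n * h\<^sup>2))"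
    if "n \<ge> 1" "0 < h" "h \<le> h0" for n h
    by (rule order_trans[OF risk_bound ennreal_leI]) (use that in \<open>simp_all add: A_def h0_def\<close>)
  show ?thesis
    apply (intro conjI)
    subgoal using \<open>A > 0\<close> \<open>B > 0\<close> \<open>h0 > 0\<close> bound
      by (intro exI[of _ A] exI[of _ B] exI[of _ 1] exI[of _ h0]) simp
    subgoal using risk_bound_tendsto_zero[OF bound \<open>h0 > 0\<close>] by blast
    subgoal using risk_bound_quarter_power_rate[OF bound \<open>h0 > 0\<close>] by auto
    done
qed

end
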